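(* Let $n\ge 3$. For $3\le i\le n$ let $R_i=\{(1\,2)(k\,i)\mid 1\le k<i\}\cup\{e\}\subseteq A_i\subseteq A_n$. Then every $v\in A_n$ can be written as $v=v_3v_4\cdots v_n$ with $v_i\in R_i$ for each $3\le i\le n$, and these elements $v_3,\dots,v_n$ are uniquely determined by $v$.
   Context: $S_n$ is the symmetric group on $[n]=\{1,\dots,n\}$, $A_n$ the alternating group (even permutations), and $e$ the identity. For $m\le n$, $S_m$ (and $A_m$) is regarded as the subgroup of $S_n$ fixing $m+1,\dots,n$. Products are compositions of permutations, with the rightmost factor applied first; $(k\,i)$ denotes a transposition, and $(1\,2)(1\,i)$, $(1\,2)(2\,i)$ are 3-cycles. *)

theory Defs
  imports "HOL-Combinatorics.Combinatorics"
begin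

text \<open>Permutations of [n] = {1..n} are functions nat => nat that permute {1..n}
  (fixing everything else). Composition is (o), rightmost factor applied first.\<close>

definition alt_grp :: "nat \<Rightarrow> (nat \<Rightarrow> nat) set" where
  "alt_grp n = {p. p permutes {1..n} \<and> evenperm p}"

definition R_set :: "nat \<Rightarrow> (nat \<Rightarrow> nat) set" where
  "R_set i = {transpose 1 2 \<circ> transpose k i | k. 1 \<le> k \<and> k < i} \<union> {id}"

definition ord_prod :: "(nat \<Rightarrow> nat \<Rightarrow> nat) \<Rightarrow> nat \<Rightarrow> nat \<Rightarrow> (nat \<Rightarrow> nat)" where
  "ord_prod vs a b = foldr (\<circ>) (map vs [a..<Suc b]) id"

end

theory Submission
  imports Defs
begin

text \<open>An element of \<open>R_i\<close> is determined by the point it sends to \<open>i\<close>: \<open>(1 2)(k i)\<close> sends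
  \<open>k\<close> to \<open>i\<close>, and \<open>e\<close> fixes \<open>i\<close>. In a factorisation \<open>v = w v_i\<close> with \<open>w \<in> A_(i-1)\<close> the
  factor \<open>w\<close> fixes \<open>i\<close>, so \<open>v_i\<close> must be the element of \<open>R_i\<close> sending \<open>v\<^sup>-\<^sup>1(i)\<close> to \<open>i\<close>;
  conversely, for that choice \<open>v v_i\<^sup>-\<^sup>1\<close> is even and fixes \<open>i\<close>. Induction on \<open>n\<close>, starting
  from \<open>A_2 = {e}\<close>, gives existence and uniqueness.\<close>

definition R_elem :: "nat \<Rightarrow> nat \<Rightarrow> nat \<Rightarrow> nat" where
  "R_elem i a = (if a = i then id else transpose 1 2 \<circ> transpose a i)"

lemma R_elem_in_R_set:
  assumes "a \<in> {1..i}"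
  shows "R_elem i a \<in> R_set i"
  using assms unfolding R_elem_def R_set_def by auto

lemma R_elem_apply:
  assumes "3 \<le> i"
  shows "R_elem i a a = i"
  using assms unfolding R_elem_def by auto

lemma R_set_eq_R_elem:
  assumes "r \<in> R_set i" "3 \<le> i" "r a = i"
  shows "r = R_elem i a"
proof -
  consider "r = id" | k where "k < i" "r = transpose 1 2 \<circ> transpose k i"
    using assms(1) unfolding R_set_def by blast
  then show ?thesis
  proof cases
    case 1
    then show ?thesis using assms(3) by (simp add: R_elem_def)
  next
    case 2
    have "transpose k i a = transpose 1 2 i"
      using assms(3) 2(2) by (metis comp_apply transpose_involutory)
    also have "\<dots> = i" using assms(2) by simp
    finally have "a = k" using 2(1) by (auto simp: transpose_def split: if_splits)
    then show ?thesis using 2 by (simp add: R_elem_def)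
  qed
qed

lemma R_set_permutes:
  assumes "r \<in> R_set i" "3 \<le> i"
  shows "r permutes {1..i}"
  using assms unfolding R_set_def
  by (auto intro!: permutes_compose permutes_swap_id permutes_id)

lemma R_set_evenperm:
  assumes "r \<in> R_set i"
  shows "evenperm r"
  using assms unfolding R_set_def
  by (auto simp: evenperm_comp permutation_swap_id evenperm_swap)

lemma ord_prod_empty: "ord_prod vs (Suc b) b = id"
  unfolding ord_prod_def by simp

lemma foldr_comp_eq_comp: "foldr (\<circ>) fs g = foldr (\<circ>) fs id \<circ> g"
  by (induction fs) (auto simp: comp_assoc)

lemma ord_prod_Suc:
  assumes "a \<le> Suc b"
  shows "ord_prod vs a (Suc b) = ord_prod vs a b \<circ> vs (Suc b)"
  using assms unfolding ord_prod_def
  by (simp add: foldr_comp_eq_comp[of _ "vs (Suc b)"])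

lemma ord_prod_cong:
  assumes "\<And>i. i \<in> {a..b} \<Longrightarrow> vs i = ws i"
  shows "ord_prod vs a b = ord_prod ws a b"
proof -
  have "map vs [a..<Suc b] = map ws [a..<Suc b]" using assms by (intro map_cong) auto
  then show ?thesis unfolding ord_prod_def by (simp only:)
qed

lemma ord_prod_R_set_permutes:
  assumes "2 \<le> m" "\<forall>i\<in>{3..m}. vs i \<in> R_set i"
  shows "ord_prod vs 3 m permutes {1..m}"
  using assms
proof (induction m rule: dec_induct)
  case base
  have "ord_prod vs 3 2 = id" using ord_prod_empty[of vs 2] by simp
  then show ?case by (simp only: permutes_id)
next
  case (step m)
  have "ord_prod vs 3 m permutes {1..Suc m}"
    using step by (auto intro: permutes_subset)
  moreover have "vs (Suc m) permutes {1..Suc m}"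
    using step by (intro R_set_permutes) auto
  ultimately have "ord_prod vs 3 m \<circ> vs (Suc m) permutes {1..Suc m}"
    by (rule permutes_compose[rotated])
  moreover have "ord_prod vs 3 (Suc m) = ord_prod vs 3 m \<circ> vs (Suc m)"
    using step(1) by (intro ord_prod_Suc) simp
  ultimately show ?case by (simp only:)
qed

lemma permutes_apply_eq_outside:
  assumes "p permutes S" "y \<notin> S" "p x = y"
  shows "x = y"
proof (cases "x \<in> S")
  case True
  then have "y \<in> S" using assms(1,3) permutes_in_image by fastforce
  with assms(2) show ?thesis by simp
next
  case False
  then show ?thesis using permutes_not_in[OF assms(1)] assms(3) by simp
qed

lemma permutes_doubleton_evenperm:
  assumes "p permutes {a, b}" "evenperm p"
  shows "p = id"
proof -
  define c where "c = p a"
  have "transpose a c \<circ> p = id"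
    using permutes_insert_lemma[of p a "{b}"] assms(1) by (simp add: c_def)
  moreover have "p = transpose a c \<circ> (transpose a c \<circ> p)" by (simp flip: comp_assoc)
  ultimately have "p = transpose a c" by simp
  with assms(2) have "c = a" by (simp add: evenperm_swap)
  with \<open>p = transpose a c\<close> show ?thesis by simp
qed

lemma R_set_factor_unique:
  assumes "3 \<le> i" "P permutes {1..<i}" "Q permutes {1..<i}"
    and "r \<in> R_set i" "s \<in> R_set i" "P \<circ> r = Q \<circ> s"
  shows "r = s \<and> P = Q"
proof -
  have rp: "r permutes {1..i}" using assms(4,1) by (rule R_set_permutes)
  define a where "a = inv r i"
  have ra: "r a = i" unfolding a_def by (rule permutes_inverses(1)[OF rp])
  have "Q (s a) = i"
    using fun_cong[OF assms(6), of a] ra permutes_not_in[OF assms(2)] by simp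
  then have sa: "s a = i" by (rule permutes_apply_eq_outside[OF assms(3), rotated]) simp
  have "r = s"
    using R_set_eq_R_elem[OF assms(4,1) ra] R_set_eq_R_elem[OF assms(5,1) sa] by simp
  have "P = (P \<circ> r) \<circ> inv r" by (simp only: comp_assoc permutes_inv_o(1)[OF rp] comp_id)
  also have "\<dots> = (Q \<circ> r) \<circ> inv r" using assms(6) \<open>r = s\<close> by (simp only:)
  also have "\<dots> = Q" by (simp only: comp_assoc permutes_inv_o(1)[OF rp] comp_id)
  finally show ?thesis using \<open>r = s\<close> by simp
qed

lemma R_set_factor_exists:
  assumes "3 \<le> i" "v permutes {1..i}" "evenperm v"
  obtains w r where "w permutes {1..<i}" "evenperm w" "r \<in> R_set i" "v = w \<circ> r"
proof -
  define a where "a = inv v i"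
  have a: "a \<in> {1..i}" "v a = i"
    using assms permutes_inverses(1)[OF assms(2)] permutes_in_image[OF permutes_inv[OF assms(2)]]
    unfolding a_def by auto
  define r where "r = R_elem i a"
  have rR: "r \<in> R_set i" unfolding r_def using a(1) by (rule R_elem_in_R_set)
  have rp: "r permutes {1..i}" using rR assms(1) by (rule R_set_permutes)
  define w where "w = v \<circ> inv r"
  have "inv r i = a"
    using permutes_inv_eq[OF rp] R_elem_apply[OF assms(1)] unfolding r_def by simp
  then have "w i = i" unfolding w_def using a(2) by simp
  then have "w permutes {1..<i}"
    unfolding w_def
    by (intro permutes_superset[OF permutes_compose[OF permutes_inv[OF rp] assms(2)]]) auto
  moreover have "evenperm w"
  proof -
    have "permutation v" "permutation r"
      using assms(2) rp by (auto intro: permutes_imp_permutation)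
    then show ?thesis
      using assms(3) R_set_evenperm[OF rR] unfolding w_def
      by (simp add: evenperm_comp evenperm_inv permutation_inverse)
  qed
  moreover have "v = w \<circ> r"
    unfolding w_def using permutes_inv_o(2)[OF rp] by (simp add: comp_assoc)
  ultimately show ?thesis using that rR by blast
qed

lemma ord_prod_R_set_surj:
  assumes "2 \<le> m" "v permutes {1..m}" "evenperm v"
  shows "\<exists>vs. (\<forall>i\<in>{3..m}. vs i \<in> R_set i) \<and> v = ord_prod vs 3 m"
  using assms
proof (induction m arbitrary: v rule: dec_induct)
  case base
  moreover have "{1..2::nat} = {1, 2}" by auto
  ultimately have "v = id" using permutes_doubleton_evenperm[of v 1 2] by simp
  then show ?case using ord_prod_empty[of _ 2] by auto
next
  case (step m)
  obtain w r where w: "w permutes {1..<Suc m}" "evenperm w" and r: "r \<in> R_set (Suc m)"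
    and v: "v = w \<circ> r"
    using R_set_factor_exists[of "Suc m" v] step by auto
  obtain vs where vs: "\<forall>i\<in>{3..m}. vs i \<in> R_set i" "w = ord_prod vs 3 m"
    using step.IH w atLeastLessThanSuc_atLeastAtMost by auto
  have "ord_prod (vs(Suc m := r)) 3 m = ord_prod vs 3 m"
    by (rule ord_prod_cong) simp
  then have "v = ord_prod (vs(Suc m := r)) 3 (Suc m)"
    using step(1) v vs(2) by (simp add: ord_prod_Suc)
  moreover have "\<forall>i\<in>{3..Suc m}. (vs(Suc m := r)) i \<in> R_set i"
    using vs(1) r by (auto simp: le_Suc_eq)
  ultimately show ?case by blast
qed

lemma ord_prod_R_set_inj:
  assumes "2 \<le> m" "\<forall>i\<in>{3..m}. vs i \<in> R_set i" "\<forall>i\<in>{3..m}. ws i \<in> R_set i"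
    and "ord_prod vs 3 m = ord_prod ws 3 m"
  shows "\<forall>i\<in>{3..m}. vs i = ws i"
  using assms
proof (induction m rule: dec_induct)
  case base
  then show ?case by simp
next
  case (step m)
  have R: "\<forall>i\<in>{3..m}. vs i \<in> R_set i" "\<forall>i\<in>{3..m}. ws i \<in> R_set i"
    using step.prems(1,2) by auto
  have le: "3 \<le> Suc m" using step(1) by simp
  have last: "vs (Suc m) = ws (Suc m) \<and> ord_prod vs 3 m = ord_prod ws 3 m"
  proof (rule R_set_factor_unique)
    show "ord_prod vs 3 m permutes {1..<Suc m}" "ord_prod ws 3 m permutes {1..<Suc m}"
      using ord_prod_R_set_permutes[OF step(1)] R atLeastLessThanSuc_atLeastAtMost by auto
    have "ord_prod vs 3 m \<circ> vs (Suc m) = ord_prod vs 3 (Suc m)"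
      by (rule ord_prod_Suc[OF le, symmetric])
    also have "\<dots> = ord_prod ws 3 (Suc m)" by (rule step.prems(3))
    also have "\<dots> = ord_prod ws 3 m \<circ> ws (Suc m)" by (rule ord_prod_Suc[OF le])
    finally show "ord_prod vs 3 m \<circ> vs (Suc m) = ord_prod ws 3 m \<circ> ws (Suc m)" .
    show "vs (Suc m) \<in> R_set (Suc m)" "ws (Suc m) \<in> R_set (Suc m)"
      using step.prems(1,2) le by auto
  qed (rule le)
  have init: "\<forall>i\<in>{3..m}. vs i = ws i" using step.IH[OF R] last by blast
  show ?case
  proof
    fix i assume "i \<in> {3..Suc m}"
    then consider "i \<in> {3..m}" | "i = Suc m" by fastforce
    then show "vs i = ws i" using init last by cases auto
  qed
qed

theorem theorem4p2:
  fixes n :: nat and v :: "nat \<Rightarrow> nat"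
  assumes "n \<ge> 3" and "v \<in> alt_grp n"
  shows "(\<exists>vs. (\<forall>i\<in>{3..n}. vs i \<in> R_set i) \<and> v = ord_prod vs 3 n)
    \<and> (\<forall>vs ws. (\<forall>i\<in>{3..n}. vs i \<in> R_set i) \<and> v = ord_prod vs 3 n
               \<and> (\<forall>i\<in>{3..n}. ws i \<in> R_set i) \<and> v = ord_prod ws 3 n
               \<longrightarrow> (\<forall>i\<in>{3..n}. vs i = ws i))"
proof
  have n: "2 \<le> n" using assms(1) by simp
  show "\<exists>vs. (\<forall>i\<in>{3..n}. vs i \<in> R_set i) \<and> v = ord_prod vs 3 n"
    using ord_prod_R_set_surj[OF n] assms(2) unfolding alt_grp_def by blast
  show "\<forall>vs ws. (\<forall>i\<in>{3..n}. vs i \<in> R_set i) \<and> v = ord_prod vs 3 n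
               \<and> (\<forall>i\<in>{3..n}. ws i \<in> R_set i) \<and> v = ord_prod ws 3 n
               \<longrightarrow> (\<forall>i\<in>{3..n}. vs i = ws i)"
    using ord_prod_R_set_inj[OF n] by metis
qed

end
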